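(* Let $T$ be a spanning tree and $\tau=\sum_{(i,j)\in T}\frac{r(i,j)}{R(C(i,j))}$. For any probability distribution over $\mathbf x\in\mathbb R^V$ such that $\mathbb E_{\mathbf x}[\mathcal B(\mathbf x)]\ge(1-\frac\epsilon\tau)\mathcal B(\mathbf x^* )$, we have $\mathbb E_{\mathbf x}[\mathcal E(\mathbf f_{T,\mathbf x})]\le(1+\epsilon)\mathcal E(\mathbf f^* )$.
   Context: $G=(V,E)$ is a connected undirected graph with resistances $r(e)>0$ and fixed orientation $\vec E$; $\mathbf b\in\mathbb R^V$ with $\sum_ib(i)=0$; a $\mathbf b$-flow has net outflow $b(i)$ at every $i$ (with $f(j,i)=-f(i,j)$). $\mathcal E(\mathbf f)=\frac12\sum_er(e)f(e)^2$, $\mathbf f^*$ is the minimum-energy $\mathbf b$-flow; $\mathbf L=\sum_{ij\in E}\frac1{r(i,j)}(\mathbf e_i-\mathbf e_j)(\mathbf e_i-\mathbf e_j)^\top$, $\mathcal B(\mathbf x)=\mathbf b^\top\mathbf x-\frac12\mathbf x^\top\mathbf L\mathbf x$, and $\mathbf x^*$ maximizes $\mathcal B$. $T$ is rooted with edges directed toward the root; $C(i,j)$ is the vertex set of the component of $T-ij$ containing $i$; $R(C)=(\sum_{e\in\delta(C)}1/r(e))^{-1}$ where $\delta(C)$ is the set of edges with exactly one endpoint in $C$. The tree-defined flow $\mathbf f_{T,\mathbf x}$ equals $\frac{x(i)-x(j)}{r(i,j)}$ on non-tree edges and on tree edges takes the unique values making it a $\mathbf b$-flow. *)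

theory Defs
  imports "HOL-Analysis.Analysis" "HOL-Probability.Probability"
begin

text \<open>Vertices are the elements of a finite type 'v (so V = UNIV).  The graph is given by
a set E of oriented edges (the fixed orientation), each edge being a pair (i,j).\<close>

definition sym_rel :: "('v \<times> 'v) set \<Rightarrow> ('v \<times> 'v) set" where
  "sym_rel F = F \<union> F\<inverse>"

definition connected_graph :: "('v \<times> 'v) set \<Rightarrow> bool" where
  "connected_graph F \<longleftrightarrow> (\<forall>u v. (u, v) \<in> (sym_rel F)\<^sup>*)"

definition oriented_graph :: "('v \<times> 'v) set \<Rightarrow> bool" where
  "oriented_graph E \<longleftrightarrow> (\<forall>i j. (i, j) \<in> E \<longrightarrow> i \<noteq> j \<and> (j, i) \<notin> E)"

definition spanning_tree :: "('v \<times> 'v) set \<Rightarrow> ('v \<times> 'v) set \<Rightarrow> bool" where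
  "spanning_tree E T \<longleftrightarrow> T \<subseteq> E \<and> connected_graph T \<and>
     (\<forall>e\<in>T. \<not> connected_graph (T - {e}))"

text \<open>f is a b-flow: net outflow b(i) at every vertex i (f(j,i) = - f(i,j) implicit).\<close>
definition is_bflow :: "('v::finite \<times> 'v) set \<Rightarrow> real^'v \<Rightarrow> ('v \<times> 'v \<Rightarrow> real) \<Rightarrow> bool" where
  "is_bflow E b f \<longleftrightarrow>
     (\<forall>i. (\<Sum>j\<in>{j. (i, j) \<in> E}. f (i, j)) - (\<Sum>j\<in>{j. (j, i) \<in> E}. f (j, i)) = b $ i)"

definition energy :: "('v \<times> 'v) set \<Rightarrow> ('v \<times> 'v \<Rightarrow> real) \<Rightarrow> ('v \<times> 'v \<Rightarrow> real) \<Rightarrow> real" where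
  "energy E r f = (1/2) * (\<Sum>e\<in>E. r e * (f e)\<^sup>2)"

definition laplacian :: "('v::finite \<times> 'v) set \<Rightarrow> ('v \<times> 'v \<Rightarrow> real) \<Rightarrow> real^'v^'v" where
  "laplacian E r = (\<Sum>(i, j)\<in>E. (1 / r (i, j)) *\<^sub>R
      (\<chi> a c. (axis i 1 - axis j 1 :: real^'v) $ a * (axis i 1 - axis j 1 :: real^'v) $ c))"

definition dualB :: "('v::finite \<times> 'v) set \<Rightarrow> ('v \<times> 'v \<Rightarrow> real) \<Rightarrow> real^'v \<Rightarrow> real^'v \<Rightarrow> real" where
  "dualB E r b x = b \<bullet> x - (1/2) * (x \<bullet> (laplacian E r *v x))"

definition cut :: "('v \<times> 'v) set \<Rightarrow> 'v set \<Rightarrow> ('v \<times> 'v) set" where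
  "cut E C = {e \<in> E. (fst e \<in> C) \<noteq> (snd e \<in> C)}"

definition Rcut :: "('v \<times> 'v) set \<Rightarrow> ('v \<times> 'v \<Rightarrow> real) \<Rightarrow> 'v set \<Rightarrow> real" where
  "Rcut E r C = inverse (\<Sum>e\<in>cut E C. 1 / r e)"

definition compC :: "('v \<times> 'v) set \<Rightarrow> 'v \<times> 'v \<Rightarrow> 'v set" where
  "compC T e = {v. (fst e, v) \<in> (sym_rel (T - {e}))\<^sup>*}"

definition tau :: "('v \<times> 'v) set \<Rightarrow> ('v \<times> 'v \<Rightarrow> real) \<Rightarrow> ('v \<times> 'v) set \<Rightarrow> real" where
  "tau E r T = (\<Sum>e\<in>T. r e / Rcut E r (compC T e))"

definition tree_flow :: "('v::finite \<times> 'v) set \<Rightarrow> ('v \<times> 'v \<Rightarrow> real) \<Rightarrow> real^'v \<Rightarrow> ('v \<times> 'v) set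
     \<Rightarrow> real^'v \<Rightarrow> ('v \<times> 'v \<Rightarrow> real)" where
  "tree_flow E r b T x = (THE f. is_bflow E b f \<and>
      (\<forall>e\<in>E - T. f e = (x $ fst e - x $ snd e) / r e) \<and> (\<forall>e. e \<notin> E \<longrightarrow> f e = 0))"

end

theory Submission
  imports Defs
begin

text \<open>
Fix a potential x and write f = f_{T,x} and g = (x(i) - x(j))/r(i,j) for the potential flow
of x.  Since f is a b-flow, the duality gap is a sum of squares,
E(f) - B(x) = 1/2 \<Sum>_e r(e) (f(e) - g(e))^2, and only tree edges contribute because f = g
off T.  For a tree edge e with C = C(e), the edge e is the only tree edge leaving C, so moving
x by \<alpha> times the indicator of C changes B by \<alpha> (f(e) - g(e)) - \<alpha>^2 / (2 R(C)).
Optimising \<alpha> and comparing with B(x*) gives r(e) (f(e) - g(e))^2 \<le> 2 r(e)/R(C) (B(x*) - B(x)),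
hence E(f_{T,x}) - B(x) \<le> \<tau> (B(x*) - B(x)).  Taking expectations and using weak duality
B(x*) \<le> E(f*), which holds for every b-flow f*, gives the bound.
\<close>

definition net_out :: "('v \<times> 'v) set \<Rightarrow> ('v \<times> 'v \<Rightarrow> real) \<Rightarrow> 'v \<Rightarrow> real" where
  "net_out F f v = (\<Sum>j\<in>{j. (v, j) \<in> F}. f (v, j)) - (\<Sum>j\<in>{j. (j, v) \<in> F}. f (j, v))"

lemma is_bflow_iff_net_out: "is_bflow E b f \<longleftrightarrow> (\<forall>i. net_out E f i = b $ i)"
  by (simp add: is_bflow_def net_out_def)

lemma net_out_add: "net_out F (\<lambda>e. f e + g e) v = net_out F f v + net_out F g v"
  by (simp add: net_out_def sum.distrib)

lemma net_out_diff: "net_out F (\<lambda>e. f e - g e) v = net_out F f v - net_out F g v"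
  by (simp add: net_out_def sum_subtractf)

lemma net_out_scale: "net_out F (\<lambda>e. c * f e) v = c * net_out F f v"
  by (simp add: net_out_def sum_distrib_left right_diff_distrib)

lemma net_out_cong: "(\<And>e. e \<in> F \<Longrightarrow> f e = g e) \<Longrightarrow> net_out F f v = net_out F g v"
  by (simp add: net_out_def)

lemma net_out_Un_disjoint:
  fixes A :: "('v::finite \<times> 'v) set"
  assumes "A \<inter> B = {}"
  shows "net_out (A \<union> B) f v = net_out A f v + net_out B f v"
proof -
  have out: "{j. (v, j) \<in> A \<union> B} = {j. (v, j) \<in> A} \<union> {j. (v, j) \<in> B}"
    and into: "{j. (j, v) \<in> A \<union> B} = {j. (j, v) \<in> A} \<union> {j. (j, v) \<in> B}" by auto
  have "{j. (v, j) \<in> A} \<inter> {j. (v, j) \<in> B} = {}" "{j. (j, v) \<in> A} \<inter> {j. (j, v) \<in> B} = {}"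
    using assms by auto
  then show ?thesis
    unfolding net_out_def out into by (simp add: sum.union_disjoint)
qed

lemma sum_edges_by_tail:
  fixes F :: "('v::finite \<times> 'v) set"
  shows "(\<Sum>v\<in>UNIV. \<Sum>j\<in>{j. (v, j) \<in> F}. G v j) = (\<Sum>e\<in>F. G (fst e) (snd e))"
proof -
  have "F = Sigma UNIV (\<lambda>v. {j. (v, j) \<in> F})" by auto
  then have "(\<Sum>e\<in>F. G (fst e) (snd e)) = (\<Sum>(v, j)\<in>Sigma UNIV (\<lambda>v. {j. (v, j) \<in> F}). G v j)"
    by (simp add: case_prod_beta')
  also have "\<dots> = (\<Sum>v\<in>UNIV. \<Sum>j\<in>{j. (v, j) \<in> F}. G v j)"
    by (rule sum.Sigma[symmetric]) auto
  finally show ?thesis by simp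
qed

lemma sum_edges_by_head:
  fixes F :: "('v::finite \<times> 'v) set"
  shows "(\<Sum>v\<in>UNIV. \<Sum>j\<in>{j. (j, v) \<in> F}. G j v) = (\<Sum>e\<in>F. G (fst e) (snd e))"
proof -
  have "(\<Sum>v\<in>UNIV. \<Sum>j\<in>{j. (j, v) \<in> F}. G j v)
      = (\<Sum>v\<in>UNIV. \<Sum>j\<in>UNIV. if (j, v) \<in> F then G j v else 0)"
    by (simp add: sum.If_cases)
  also have "\<dots> = (\<Sum>j\<in>UNIV. \<Sum>v\<in>UNIV. if (j, v) \<in> F then G j v else 0)"
    by (rule sum.swap)
  also have "\<dots> = (\<Sum>j\<in>UNIV. \<Sum>v\<in>{v. (j, v) \<in> F}. G j v)"
    by (simp add: sum.If_cases)
  finally show ?thesis by (simp add: sum_edges_by_tail)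
qed

lemma sum_mult_net_out:
  fixes F :: "('v::finite \<times> 'v) set"
  shows "(\<Sum>v\<in>UNIV. w v * net_out F f v) = (\<Sum>e\<in>F. f e * (w (fst e) - w (snd e)))"
proof -
  have "(\<Sum>v\<in>UNIV. w v * net_out F f v)
      = (\<Sum>v\<in>UNIV. \<Sum>j\<in>{j. (v, j) \<in> F}. w v * f (v, j))
        - (\<Sum>v\<in>UNIV. \<Sum>j\<in>{j. (j, v) \<in> F}. w v * f (j, v))"
    by (simp add: net_out_def right_diff_distrib sum_distrib_left sum_subtractf)
  also have "\<dots> = (\<Sum>e\<in>F. w (fst e) * f e) - (\<Sum>e\<in>F. w (snd e) * f e)"
    by (simp add: sum_edges_by_tail sum_edges_by_head)
  also have "\<dots> = (\<Sum>e\<in>F. f e * (w (fst e) - w (snd e)))"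
    by (simp add: sum_subtractf[symmetric] algebra_simps)
  finally show ?thesis .
qed

lemma sum_net_out_eq_0:
  fixes F :: "('v::finite \<times> 'v) set"
  shows "(\<Sum>v\<in>UNIV. net_out F f v) = 0"
  using sum_mult_net_out[of "\<lambda>v. 1" F f] by simp

lemma inner_bflow:
  fixes E :: "('v::finite \<times> 'v) set"
  assumes "is_bflow E b f"
  shows "b \<bullet> u = (\<Sum>e\<in>E. f e * (u $ fst e - u $ snd e))"
proof -
  have "b \<bullet> u = (\<Sum>v\<in>UNIV. u $ v * net_out E f v)"
    using assms by (simp add: inner_vec_def is_bflow_iff_net_out mult.commute)
  then show ?thesis by (simp add: sum_mult_net_out)
qed

lemma inner_laplacian:
  fixes E :: "('v::finite \<times> 'v) set"
  shows "x \<bullet> (laplacian E r *v y)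
    = (\<Sum>e\<in>E. (x $ fst e - x $ snd e) * (y $ fst e - y $ snd e) / r e)"
proof -
  define d :: "'v \<times> 'v \<Rightarrow> real^'v" where "d e = axis (fst e) 1 - axis (snd e) 1" for e
  have entry: "laplacian E r $ a $ c = (\<Sum>e\<in>E. 1 / r e * (d e $ a * d e $ c))" for a c
    unfolding laplacian_def d_def by (simp add: case_prod_beta')
  have "x \<bullet> (laplacian E r *v y) = (\<Sum>a\<in>UNIV. \<Sum>c\<in>UNIV. \<Sum>e\<in>E. 1 / r e * (x $ a * d e $ a) * (d e $ c * y $ c))"
    by (simp add: inner_vec_def matrix_vector_mult_def entry sum_distrib_left sum_distrib_right
        mult.assoc mult.left_commute)
  also have "\<dots> = (\<Sum>e\<in>E. 1 / r e * (\<Sum>a\<in>UNIV. x $ a * d e $ a) * (\<Sum>c\<in>UNIV. d e $ c * y $ c))"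
    by (simp add: sum_distrib_left sum_distrib_right sum.swap[where B=E])
      (rule sum.cong[OF refl], rule sum.swap)
  also have "\<dots> = (\<Sum>e\<in>E. 1 / r e * (x \<bullet> d e) * (d e \<bullet> y))"
    by (simp add: inner_vec_def mult.commute)
  also have "\<dots> = (\<Sum>e\<in>E. (x $ fst e - x $ snd e) * (y $ fst e - y $ snd e) / r e)"
    by (simp add: d_def inner_diff_right inner_diff_left inner_axis inner_axis')
  finally show ?thesis .
qed

lemma dualB_eq:
  fixes E :: "('v::finite \<times> 'v) set"
  shows "dualB E r b x = b \<bullet> x - 1/2 * (\<Sum>e\<in>E. (x $ fst e - x $ snd e)^2 / r e)"
  by (simp add: dualB_def inner_laplacian power2_eq_square)

lemma energy_nonneg:
  assumes "\<forall>e\<in>E. r e > 0"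
  shows "energy E r f \<ge> 0"
  unfolding energy_def using assms by (intro mult_nonneg_nonneg sum_nonneg) (auto intro: less_imp_le)

lemma energy_minus_dualB:
  fixes E :: "('v::finite \<times> 'v) set"
  assumes flow: "is_bflow E b f" and rpos: "\<forall>e\<in>E. r e > 0"
  shows "energy E r f - dualB E r b x
    = 1/2 * (\<Sum>e\<in>E. r e * (f e - (x $ fst e - x $ snd e) / r e)^2)"
proof -
  have r_nz: "\<And>e. e \<in> E \<Longrightarrow> r e \<noteq> 0" using rpos by force
  have "energy E r f - dualB E r b x = (\<Sum>e\<in>E. 1/2 * (r e * (f e)^2)
      - f e * (x $ fst e - x $ snd e) + 1/2 * ((x $ fst e - x $ snd e)^2 / r e))"
    using inner_bflow[OF flow, of x]
    by (simp add: energy_def dualB_eq sum.distrib sum_subtractf sum_distrib_left)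
  also have "\<dots> = (\<Sum>e\<in>E. 1/2 * (r e * (f e - (x $ fst e - x $ snd e) / r e)^2))"
    by (intro sum.cong refl) (simp add: r_nz field_simps power2_eq_square)
  finally show ?thesis by (simp add: sum_distrib_left)
qed

lemma dualB_le_energy:
  fixes E :: "('v::finite \<times> 'v) set"
  assumes "is_bflow E b f" and rpos: "\<forall>e\<in>E. r e > 0"
  shows "dualB E r b x \<le> energy E r f"
proof -
  have "0 \<le> 1/2 * (\<Sum>e\<in>E. r e * (f e - (x $ fst e - x $ snd e) / r e)^2)"
    using rpos by (intro mult_nonneg_nonneg sum_nonneg) (auto intro: less_imp_le)
  then show ?thesis using energy_minus_dualB[OF assms, of x] by simp
qed

lemma dualB_add_scaleR:
  fixes E :: "('v::finite \<times> 'v) set"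
  assumes rpos: "\<forall>e\<in>E. r e > 0"
  shows "dualB E r b (x + a *\<^sub>R u) = dualB E r b x
     + a * (b \<bullet> u - (\<Sum>e\<in>E. (x $ fst e - x $ snd e) / r e * (u $ fst e - u $ snd e)))
     - a^2 / 2 * (\<Sum>e\<in>E. (u $ fst e - u $ snd e)^2 / r e)"
proof -
  have r_nz: "\<And>e. e \<in> E \<Longrightarrow> r e \<noteq> 0" using rpos by force
  have "(\<Sum>e\<in>E. ((x + a *\<^sub>R u) $ fst e - (x + a *\<^sub>R u) $ snd e)^2 / r e)
     = (\<Sum>e\<in>E. (x $ fst e - x $ snd e)^2 / r e
        + 2 * a * ((x $ fst e - x $ snd e) / r e * (u $ fst e - u $ snd e))
        + a^2 * ((u $ fst e - u $ snd e)^2 / r e))"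
    by (intro sum.cong refl) (simp add: r_nz field_simps power2_eq_square)
  then show ?thesis
    by (simp add: dualB_eq sum.distrib sum_distrib_left inner_add_right algebra_simps)
qed

definition indicator_vec :: "'v set \<Rightarrow> real^'v::finite" where
  "indicator_vec C = (\<chi> v. if v \<in> C then 1 else 0)"

lemma sum_indicator_vec_diff_sq:
  fixes E :: "('v::finite \<times> 'v) set"
  shows "(\<Sum>e\<in>E. (indicator_vec C $ fst e - indicator_vec C $ snd e)^2 / r e)
    = inverse (Rcut E r C)"
proof -
  have "inverse (Rcut E r C) = (\<Sum>e\<in>E. if (fst e \<in> C) \<noteq> (snd e \<in> C) then 1 / r e else 0)"
    unfolding Rcut_def cut_def by (simp add: sum.inter_filter)
  also have "\<dots> = (\<Sum>e\<in>E. (indicator_vec C $ fst e - indicator_vec C $ snd e)^2 / r e)"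
    by (rule sum.cong) (auto simp: indicator_vec_def)
  finally show ?thesis by simp
qed

lemma sym_rel_rtrancl_sym: "(a, c) \<in> (sym_rel F)\<^sup>* \<Longrightarrow> (c, a) \<in> (sym_rel F)\<^sup>*"
  by (metis converse_Un converse_converse rtrancl_converseI sup_commute sym_rel_def)

lemma const_on_connected:
  assumes "\<And>e. e \<in> T \<Longrightarrow> z $ fst e = z $ snd e"
    and "(u, v) \<in> (sym_rel T)\<^sup>*"
  shows "z $ u = z $ v"
  using assms(2) by induction (use assms(1) in \<open>auto simp: sym_rel_def\<close>)

lemma fst_in_compC: "fst e \<in> compC T e"
  by (simp add: compC_def)

lemma snd_notin_compC:
  assumes tree: "spanning_tree E T" and e: "e \<in> T"
  shows "snd e \<notin> compC T e"
proof
  assume "snd e \<in> compC T e"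
  then have path: "(fst e, snd e) \<in> (sym_rel (T - {e}))\<^sup>*" by (simp add: compC_def)
  have "sym_rel T \<subseteq> (sym_rel (T - {e}))\<^sup>*"
  proof
    fix p assume p: "p \<in> sym_rel T"
    show "p \<in> (sym_rel (T - {e}))\<^sup>*"
    proof (cases "p = e \<or> prod.swap p = e")
      case True
      then show ?thesis using path sym_rel_rtrancl_sym[OF path] by (cases p) auto
    next
      case False
      then have "p \<in> sym_rel (T - {e})" using p by (cases p) (auto simp: sym_rel_def)
      then show ?thesis by auto
    qed
  qed
  then have "(sym_rel T)\<^sup>* \<subseteq> (sym_rel (T - {e}))\<^sup>*"
    by (rule rtrancl_subset_rtrancl)
  then have "connected_graph (T - {e})"
    using tree by (auto simp: spanning_tree_def connected_graph_def)
  then show False using tree e by (auto simp: spanning_tree_def)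
qed

lemma compC_fst_iff_snd:
  assumes "e' \<in> T" "e' \<noteq> e"
  shows "fst e' \<in> compC T e \<longleftrightarrow> snd e' \<in> compC T e"
proof -
  have "(fst e', snd e') \<in> sym_rel (T - {e})" "(snd e', fst e') \<in> sym_rel (T - {e})"
    using assms by (auto simp: sym_rel_def)
  then show ?thesis unfolding compC_def by (auto intro: rtrancl_into_rtrancl)
qed

lemma sum_crossing_compC:
  fixes E :: "('v::finite \<times> 'v) set"
  assumes tree: "spanning_tree E T" and e: "e \<in> T" and off_tree: "\<forall>e'\<in>E - T. h e' = 0"
  shows "(\<Sum>e'\<in>E. h e' * (indicator_vec (compC T e) $ fst e' - indicator_vec (compC T e) $ snd e'))
    = h e"
proof -
  let ?d = "\<lambda>e'. indicator_vec (compC T e) $ fst e' - indicator_vec (compC T e) $ snd e'"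
  have eE: "e \<in> E" using tree e by (auto simp: spanning_tree_def)
  have "(\<Sum>e'\<in>E - {e}. h e' * ?d e') = 0"
  proof (rule sum.neutral, rule ballI)
    fix e' assume e': "e' \<in> E - {e}"
    show "h e' * ?d e' = 0"
      using compC_fst_iff_snd[of e' T e] off_tree e' by (cases "e' \<in> T") (auto simp: indicator_vec_def)
  qed
  moreover have "?d e = 1"
    using fst_in_compC[of e T] snd_notin_compC[OF tree e] by (simp add: indicator_vec_def)
  ultimately show ?thesis using eE by (simp add: sum.remove)
qed

lemma Rcut_compC_pos:
  fixes E :: "('v::finite \<times> 'v) set"
  assumes tree: "spanning_tree E T" and rpos: "\<forall>e\<in>E. r e > 0" and e: "e \<in> T"
  shows "Rcut E r (compC T e) > 0"
proof -
  have "e \<in> cut E (compC T e)"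
    using tree e fst_in_compC[of e T] snd_notin_compC[OF tree e]
    by (auto simp: cut_def spanning_tree_def)
  moreover have "\<forall>e'\<in>cut E (compC T e). 1 / r e' > 0"
    using rpos by (simp add: cut_def)
  ultimately have "(\<Sum>e'\<in>cut E (compC T e). 1 / r e') > 0"
    by (intro sum_pos2[where i=e]) (auto intro: less_imp_le)
  then show ?thesis by (simp add: Rcut_def)
qed

lemma tau_pos:
  fixes E :: "('v::finite \<times> 'v) set"
  assumes tree: "spanning_tree E T" and rpos: "\<forall>e\<in>E. r e > 0" and "T \<noteq> {}"
  shows "tau E r T > 0"
proof -
  obtain e where e: "e \<in> T" using assms(3) by auto
  have pos: "r e' / Rcut E r (compC T e') > 0" if "e' \<in> T" for e'
    using that tree rpos Rcut_compC_pos[OF tree rpos that] by (auto simp: spanning_tree_def)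
  show ?thesis
    unfolding tau_def using e pos[OF e] pos tree
    by (intro sum_pos2[where i=e]) (auto simp: spanning_tree_def less_imp_le intro: finite_subset)
qed

lemma dualB_eq_0_if_trivial:
  fixes E :: "('v::finite \<times> 'v) set"
  assumes "connected_graph ({} :: ('v \<times> 'v) set)" and bsum: "(\<Sum>i\<in>UNIV. b $ i) = 0"
  shows "dualB E r b x = 0"
proof -
  have all_eq: "u = v" for u v :: 'v
    using assms(1) by (simp add: connected_graph_def sym_rel_def)
  then obtain v0 :: 'v where v0: "UNIV = {v0}" by (metis UNIV_eq_I singletonI)
  have "b $ i = 0" for i using bsum all_eq[of i v0] by (simp add: v0)
  moreover have "x $ fst e - x $ snd e = 0" for e :: "'v \<times> 'v"
    using all_eq[of "fst e" "snd e"] by simp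
  ultimately show ?thesis by (simp add: dualB_eq inner_vec_def)
qed

definition net_out_vec :: "('v::finite \<times> 'v) set \<Rightarrow> real^('v \<times> 'v) \<Rightarrow> real^'v" where
  "net_out_vec T h = (\<chi> v. net_out T (\<lambda>e. h $ e) v)"

lemma linear_net_out_vec: "linear (net_out_vec T)"
  by (rule linearI) (simp_all add: net_out_vec_def vec_eq_iff net_out_add net_out_scale)

lemma orthogonal_net_out_vec_edge:
  fixes T :: "('v::finite \<times> 'v) set"
  assumes orth: "orthogonal z (net_out_vec T (axis e 1))" and e: "e \<in> T"
  shows "z $ fst e = z $ snd e"
proof -
  have "0 = z \<bullet> net_out_vec T (axis e 1)" using orth by (simp add: orthogonal_def)
  also have "\<dots> = (\<Sum>e'\<in>T. axis e 1 $ e' * (z $ fst e' - z $ snd e'))"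
    by (simp add: inner_vec_def net_out_vec_def sum_mult_net_out)
  also have "\<dots> = (\<Sum>e'\<in>T. if e' = e then z $ fst e' - z $ snd e' else 0)"
    by (rule sum.cong) (auto simp: axis_def)
  also have "\<dots> = z $ fst e - z $ snd e" using e by simp
  finally show ?thesis by simp
qed

text \<open>A vector orthogonal to every net outflow vector is constant along the edges of T,
hence constant, hence zero once it sums to zero.\<close>

lemma net_out_surj:
  fixes T :: "('v::finite \<times> 'v) set" and d :: "real^'v"
  assumes conn: "connected_graph T" and dsum: "(\<Sum>v\<in>UNIV. d $ v) = 0"
  shows "\<exists>h. \<forall>v. net_out T h v = d $ v"
proof -
  let ?W = "range (net_out_vec T)"
  have span_W: "span ?W = ?W"
    using linear_subspace_image[OF linear_net_out_vec subspace_UNIV] by (simp add: span_eq_iff)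
  obtain y z where y: "y \<in> ?W" and z: "\<And>w. w \<in> ?W \<Longrightarrow> orthogonal z w" and dyz: "d = y + z"
    using orthogonal_subspace_decomp_exists[of ?W d] span_W by auto
  have z_edge: "z $ fst e = z $ snd e" if "e \<in> T" for e
    by (rule orthogonal_net_out_vec_edge[OF z that]) simp
  obtain v0 :: 'v where True by simp
  have z_const: "z $ v = z $ v0" for v
    using const_on_connected[of T z v v0, OF z_edge] conn by (simp add: connected_graph_def)
  obtain h where h: "y = net_out_vec T h" using y by auto
  have "(\<Sum>v\<in>UNIV. y $ v) = 0"
    using sum_net_out_eq_0[of T "\<lambda>e. h $ e"] by (simp add: h net_out_vec_def)
  then have "(\<Sum>v\<in>UNIV. z $ v) = 0" using dsum dyz by (simp add: sum.distrib)
  moreover have "(\<Sum>v\<in>UNIV. z $ v) = (\<Sum>v\<in>(UNIV :: 'v set). z $ v0)"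
    by (intro sum.cong refl z_const)
  ultimately have "of_nat CARD('v) * z $ v0 = 0" by simp
  then have "z = 0" using z_const by (simp add: vec_eq_iff)
  then show ?thesis using dyz h by (auto simp: net_out_vec_def vec_eq_iff)
qed

lemma ex1_tree_flow:
  fixes E :: "('v::finite \<times> 'v) set"
  assumes tree: "spanning_tree E T" and bsum: "(\<Sum>i\<in>UNIV. b $ i) = 0"
  shows "\<exists>!f. is_bflow E b f \<and> (\<forall>e\<in>E - T. f e = g e) \<and> (\<forall>e. e \<notin> E \<longrightarrow> f e = 0)"
proof (rule ex_ex1I)
  have TE: "T \<subseteq> E" and conn: "connected_graph T" using tree by (auto simp: spanning_tree_def)
  have "(\<Sum>v\<in>UNIV. b $ v - net_out (E - T) g v) = 0"
    using bsum sum_net_out_eq_0[of "E - T" g] by (simp add: sum_subtractf)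
  then obtain h where h: "\<And>v. net_out T h v = b $ v - net_out (E - T) g v"
    using net_out_surj[OF conn, of "\<chi> v. b $ v - net_out (E - T) g v"] by auto
  define f where "f e = (if e \<in> T then h e else if e \<in> E then g e else 0)" for e
  have "net_out E f v = net_out T f v + net_out (E - T) f v" for v
    using net_out_Un_disjoint[of T "E - T" f v] TE by (simp add: Un_absorb1)
  also have "net_out T f v + net_out (E - T) f v = b $ v" for v
    using h[of v] net_out_cong[of T f h] net_out_cong[of "E - T" f g] by (simp add: f_def)
  finally show "\<exists>f. is_bflow E b f \<and> (\<forall>e\<in>E - T. f e = g e) \<and> (\<forall>e. e \<notin> E \<longrightarrow> f e = 0)"
    using TE by (intro exI[of _ f]) (auto simp: is_bflow_iff_net_out f_def)
next
  fix f1 f2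
  assume f1: "is_bflow E b f1 \<and> (\<forall>e\<in>E - T. f1 e = g e) \<and> (\<forall>e. e \<notin> E \<longrightarrow> f1 e = 0)"
    and f2: "is_bflow E b f2 \<and> (\<forall>e\<in>E - T. f2 e = g e) \<and> (\<forall>e. e \<notin> E \<longrightarrow> f2 e = 0)"
  show "f1 = f2"
  proof
    fix e
    let ?h = "\<lambda>e. f1 e - f2 e"
    have off_tree: "?h e' = 0" if "e' \<notin> T" for e'
      using f1 f2 that by (metis DiffI diff_self)
    show "f1 e = f2 e"
    proof (cases "e \<in> T")
      case True
      have "net_out E ?h v = 0" for v
        using f1 f2 by (simp add: net_out_diff is_bflow_iff_net_out)
      then have "0 = (\<Sum>v\<in>UNIV. indicator_vec (compC T e) $ v * net_out E ?h v)" by simp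
      also have "\<dots> = ?h e"
        using sum_crossing_compC[OF tree True, of ?h] off_tree by (simp add: sum_mult_net_out)
      finally show ?thesis by simp
    qed (use off_tree in simp)
  qed
qed

lemma tree_flow_spec:
  fixes E :: "('v::finite \<times> 'v) set"
  assumes "spanning_tree E T" and "(\<Sum>i\<in>UNIV. b $ i) = 0"
  shows "is_bflow E b (tree_flow E r b T x)"
    and "\<forall>e\<in>E - T. tree_flow E r b T x e = (x $ fst e - x $ snd e) / r e"
    and "\<forall>e. e \<notin> E \<longrightarrow> tree_flow E r b T x e = 0"
  using theI'[OF ex1_tree_flow[OF assms, of "\<lambda>e. (x $ fst e - x $ snd e) / r e"]]
  unfolding tree_flow_def by auto

lemma tree_flow_edge_gap_le:
  fixes E :: "('v::finite \<times> 'v) set"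
  assumes rpos: "\<forall>e\<in>E. r e > 0" and bsum: "(\<Sum>i\<in>UNIV. b $ i) = 0"
    and xstar_max: "\<forall>x. dualB E r b x \<le> dualB E r b xstar"
    and tree: "spanning_tree E T" and e: "e \<in> T"
  shows "r e * (tree_flow E r b T x e - (x $ fst e - x $ snd e) / r e)^2
    \<le> 2 * (r e / Rcut E r (compC T e)) * (dualB E r b xstar - dualB E r b x)"
proof -
  define f where "f = tree_flow E r b T x"
  define g where "g e' = (x $ fst e' - x $ snd e') / r e'" for e'
  define u where "u = indicator_vec (compC T e)"
  define S where "S = inverse (Rcut E r (compC T e))"
  define slope where "slope = b \<bullet> u - (\<Sum>e'\<in>E. g e' * (u $ fst e' - u $ snd e'))"
  have S_pos: "S > 0" using Rcut_compC_pos[OF tree rpos e] by (simp add: S_def)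
  have "slope = (\<Sum>e'\<in>E. (f e' - g e') * (u $ fst e' - u $ snd e'))"
    using inner_bflow[OF tree_flow_spec(1)[OF tree bsum, of r x], of u]
    by (simp add: slope_def f_def sum_subtractf left_diff_distrib)
  also have "\<dots> = f e - g e"
    using sum_crossing_compC[OF tree e, of "\<lambda>e'. f e' - g e'"] tree_flow_spec(2)[OF tree bsum]
    by (simp add: u_def f_def g_def)
  finally have slope_eq: "slope = f e - g e" .
  have "b \<bullet> u - (\<Sum>e'\<in>E. (x $ fst e' - x $ snd e') / r e' * (u $ fst e' - u $ snd e')) = slope"
    by (simp add: slope_def g_def)
  moreover have "(\<Sum>e'\<in>E. (u $ fst e' - u $ snd e')^2 / r e') = S"
    by (simp add: u_def S_def sum_indicator_vec_diff_sq)
  ultimately have "dualB E r b (x + (slope / S) *\<^sub>R u)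
      = dualB E r b x + slope / S * slope - (slope / S)^2 / 2 * S"
    using dualB_add_scaleR[OF rpos, of b x "slope / S" u] by simp
  moreover have "slope / S * slope - (slope / S)^2 / 2 * S = slope^2 / (2 * S)"
    using S_pos by (simp add: field_simps power2_eq_square)
  ultimately have "dualB E r b x + slope^2 / (2 * S) = dualB E r b (x + (slope / S) *\<^sub>R u)"
    by linarith
  also have "\<dots> \<le> dualB E r b xstar" using xstar_max by blast
  finally have "slope^2 \<le> 2 * S * (dualB E r b xstar - dualB E r b x)"
    using S_pos by (simp add: field_simps)
  moreover have "r e > 0" using rpos e tree by (auto simp: spanning_tree_def)
  ultimately have "r e * slope^2 \<le> r e * (2 * S * (dualB E r b xstar - dualB E r b x))"
    by (simp add: mult_left_mono)
  then show ?thesis by (simp add: slope_eq f_def g_def S_def divide_inverse algebra_simps)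
qed

lemma energy_tree_flow_le:
  fixes E :: "('v::finite \<times> 'v) set"
  assumes rpos: "\<forall>e\<in>E. r e > 0" and bsum: "(\<Sum>i\<in>UNIV. b $ i) = 0"
    and xstar_max: "\<forall>x. dualB E r b x \<le> dualB E r b xstar"
    and tree: "spanning_tree E T"
  shows "energy E r (tree_flow E r b T x)
    \<le> dualB E r b x + tau E r T * (dualB E r b xstar - dualB E r b x)"
proof -
  define f where "f = tree_flow E r b T x"
  define g where "g e = (x $ fst e - x $ snd e) / r e" for e
  have TE: "T \<subseteq> E" using tree by (auto simp: spanning_tree_def)
  have "energy E r f - dualB E r b x = 1/2 * (\<Sum>e\<in>E. r e * (f e - g e)^2)"
    using energy_minus_dualB[OF tree_flow_spec(1)[OF tree bsum] rpos] by (simp add: f_def g_def)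
  also have "\<dots> = 1/2 * (\<Sum>e\<in>T. r e * (f e - g e)^2)"
    using TE tree_flow_spec(2)[OF tree bsum] by (auto simp: f_def g_def intro!: sum.mono_neutral_right)
  also have "\<dots> \<le> 1/2 * (\<Sum>e\<in>T. 2 * (r e / Rcut E r (compC T e)) * (dualB E r b xstar - dualB E r b x))"
    using tree_flow_edge_gap_le[OF rpos bsum xstar_max tree] by (auto simp: f_def g_def intro!: sum_mono)
  also have "\<dots> = tau E r T * (dualB E r b xstar - dualB E r b x)"
    by (simp add: tau_def sum_distrib_right sum_distrib_left)
  finally show ?thesis by (simp add: f_def)
qed

lemma tau_mult_gap_le:
  fixes E :: "('v::finite \<times> 'v) set"
  assumes tree: "spanning_tree E T" and rpos: "\<forall>e\<in>E. r e > 0"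
    and bsum: "(\<Sum>i\<in>UNIV. b $ i) = 0"
    and "I \<ge> (1 - \<epsilon> / tau E r T) * dualB E r b xstar"
  shows "tau E r T * (dualB E r b xstar - I) \<le> \<epsilon> * dualB E r b xstar"
proof (cases "T = {}")
  case True
  then show ?thesis
    using tree dualB_eq_0_if_trivial[OF _ bsum] by (simp add: spanning_tree_def tau_def)
next
  case False
  then show ?thesis using assms(4) tau_pos[OF tree rpos False] by (simp add: field_simps)
qed

lemma nn_integral_le_integral:
  fixes g :: "'a \<Rightarrow> real"
  assumes "integrable M g" and "\<And>x. 0 \<le> h x" and "\<And>x. h x \<le> g x"
  shows "(\<integral>\<^sup>+ x. ennreal (h x) \<partial>M) \<le> ennreal (\<integral>x. g x \<partial>M)"
proof -
  have "(\<integral>\<^sup>+ x. ennreal (h x) \<partial>M) \<le> (\<integral>\<^sup>+ x. ennreal (g x) \<partial>M)"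
    using assms(3) by (intro nn_integral_mono ennreal_leI)
  also have "\<dots> = ennreal (\<integral>x. g x \<partial>M)"
    using assms by (intro nn_integral_eq_integral) (auto intro: order_trans)
  finally show ?thesis .
qed

lemma ennreal_le_mult_of_le:
  fixes c y z :: real
  assumes "x \<le> c * y" and "0 \<le> y" and "y \<le> z"
  shows "ennreal x \<le> ennreal (c * z)"
proof (cases "c \<ge> 0")
  case True
  then show ?thesis using assms by (intro ennreal_leI) (meson mult_left_mono order_trans)
next
  case False
  then have "x \<le> 0" using assms by (meson mult_nonpos_nonneg nle_le order_trans)
  then show ?thesis by (simp add: ennreal_neg)
qed

theorem mainTheorem16:
  fixes E :: "('v::finite \<times> 'v) set"
    and r :: "'v \<times> 'v \<Rightarrow> real"
    and b :: "real^'v"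
    and fstar :: "'v \<times> 'v \<Rightarrow> real"
    and xstar :: "real^'v"
    and T :: "('v \<times> 'v) set"
    and M :: "(real^'v) measure"
    and \<epsilon> :: real
  assumes graph: "oriented_graph E" and conn: "connected_graph E"
    and rpos: "\<forall>e\<in>E. r e > 0"
    and bsum: "(\<Sum>i\<in>UNIV. b $ i) = 0"
    and fstar_flow: "is_bflow E b fstar"
    and fstar_min: "\<forall>f. is_bflow E b f \<longrightarrow> energy E r fstar \<le> energy E r f"
    and xstar_max: "\<forall>x. dualB E r b x \<le> dualB E r b xstar"
    and tree: "spanning_tree E T"
    and prob: "prob_space M" and sets_M: "sets M = sets borel"
    and intB: "integrable M (\<lambda>x. dualB E r b x)"
    and hyp: "(\<integral>x. dualB E r b x \<partial>M) \<ge> (1 - \<epsilon> / tau E r T) * dualB E r b xstar"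
  shows "(\<integral>\<^sup>+ x. ennreal (energy E r (tree_flow E r b T x)) \<partial>M)
           \<le> ennreal ((1 + \<epsilon>) * energy E r fstar)"
proof -
  interpret prob_space M by (rule prob)
  define I where "I = (\<integral>x. dualB E r b x \<partial>M)"
  let ?B = "dualB E r b xstar" and ?\<tau> = "tau E r T"
  have "(\<integral>\<^sup>+ x. ennreal (energy E r (tree_flow E r b T x)) \<partial>M)
      \<le> ennreal (\<integral>x. dualB E r b x + ?\<tau> * (?B - dualB E r b x) \<partial>M)"
    using intB energy_nonneg[OF rpos] energy_tree_flow_le[OF rpos bsum xstar_max tree]
    by (intro nn_integral_le_integral) auto
  also have "(\<integral>x. dualB E r b x + ?\<tau> * (?B - dualB E r b x) \<partial>M) = I + ?\<tau> * (?B - I)"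
    using intB by (simp add: I_def prob_space)
  also have "ennreal (I + ?\<tau> * (?B - I)) \<le> ennreal ((1 + \<epsilon>) * energy E r fstar)"
  proof (rule ennreal_le_mult_of_le)
    have "I \<le> ?B"
      using integral_mono[OF intB _ xstar_max[rule_format]] by (simp add: I_def prob_space)
    moreover have "?\<tau> * (?B - I) \<le> \<epsilon> * ?B"
      using tau_mult_gap_le[OF tree rpos bsum] hyp by (simp add: I_def)
    ultimately show "I + ?\<tau> * (?B - I) \<le> (1 + \<epsilon>) * ?B" by (simp add: algebra_simps)
    show "0 \<le> ?B" using xstar_max[rule_format, of 0] by (simp add: dualB_def)
    show "?B \<le> energy E r fstar" by (rule dualB_le_energy[OF fstar_flow rpos])
  qed
  finally show ?thesis .
qed

end
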